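(* Let $a=(a_{31}a_{30}\cdots a_{0})_2$ be an IEEE 754 \textbf{binary32} (normalized) floating-point number, so that $$a=(-1)^{a_{31}}\times 2^{(a_{30}a_{29}\cdots a_{23})_2-127}\times\Big(1+\sum_{i=1}^{23}a_{23-i}2^{-i}\Big).$$ Let $p\in[0,1]$, and let $\tilde a$ be the number obtained from $a$ by keeping the sign bit $a_{31}$ and the exponent bits $a_{30},\dots,a_{23}$ unchanged and flipping each of the 23 fraction bits $a_{22},\dots,a_0$ independently with probability $p$. Then the mean of the decimal value of $\tilde a$ is $$\mathbb{E}(\tilde a)=(1-2p)\,a+(-1)^{a_{31}}\,2^{(a_{30}a_{29}\cdots a_{23})_2-127}\Big(2p+\sum_{i=1}^{23}2^{-i}p\Big),$$ and its variance is $$\mathrm{Var}(\tilde a)=\frac{1-4^{-23}}{3}\,p(1-p)\,2^{2(a_{30}a_{29}\cdots a_{23})_2-254}.$$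
   Context: $(b_k\cdots b_0)_2$ denotes the nonnegative integer (or, after a binary point, the binary fraction) with binary digits $b_k,\dots,b_0$. In \textbf{binary32}, $a_{31}$ is the sign bit, $a_{30}\cdots a_{23}$ are the 8 exponent bits and $a_{22}\cdots a_0$ are the 23 fraction bits, with an implicit leading 1 before the binary point. *)

theory Defs
  imports "HOL-Probability.Probability"
begin

text \<open>A binary32 word is modelled by its bits a_0,...,a_31 as a function nat => bool
  (only indices 0..31 matter).\<close>

definition exp_field :: "(nat \<Rightarrow> bool) \<Rightarrow> nat" where
  "exp_field a = (\<Sum>i<8. of_bool (a (23 + i)) * 2 ^ i)"

definition normalized32 :: "(nat \<Rightarrow> bool) \<Rightarrow> bool" where
  "normalized32 a \<longleftrightarrow> 1 \<le> exp_field a \<and> exp_field a \<le> 254"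

definition val32 :: "(nat \<Rightarrow> bool) \<Rightarrow> real" where
  "val32 a = (-1) ^ of_bool (a 31) * 2 powr (real (exp_field a) - 127)
     * (1 + (\<Sum>i=1..23. of_bool (a (23 - i)) * (1/2) ^ i))"

definition flip_frac :: "(nat \<Rightarrow> bool) \<Rightarrow> (nat \<Rightarrow> bool) \<Rightarrow> (nat \<Rightarrow> bool)" where
  "flip_frac a f = (\<lambda>j. if j < 23 then (a j \<noteq> f j) else a j)"

definition perturbed32 :: "real \<Rightarrow> (nat \<Rightarrow> bool) \<Rightarrow> real pmf" where
  "perturbed32 p a = map_pmf (\<lambda>f. val32 (flip_frac a f))
      (Pi_pmf {..<23} False (\<lambda>_. bernoulli_pmf p))"

end

theory Submission
  imports Defs
begin

text \<open>Flipping fraction bit \<open>k\<close> replaces \<open>a\<^sub>k\<close> by \<open>B\<^sub>k = [a\<^sub>k \<noteq> f\<^sub>k]\<close>, so the perturbed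
  value is \<open>s + (\<Sum>k<23. s 2^(k - 23) B\<^sub>k)\<close>, where \<open>s\<close> is the signed power of two carried by
  the implicit leading bit and the \<open>B\<^sub>k\<close> are independent Bernoulli variables with mean
  \<open>p\<close> or \<open>1 - p\<close> and variance \<open>p (1 - p)\<close>. Linearity of expectation gives the mean.
  The summands being independent, their variances add (Bienayme), which leaves the
  geometric sum \<open>(\<Sum>i=1..23. 4^(-i)) = (1 - 4^(-23)) / 3\<close>.\<close>

lemma (in prob_space) variance_add_indep_var:
  fixes X Y :: "'a \<Rightarrow> real"
  assumes indep: "indep_var borel X borel Y"
    and X: "integrable M X" "integrable M (\<lambda>\<omega>. (X \<omega>)\<^sup>2)"
    and Y: "integrable M Y" "integrable M (\<lambda>\<omega>. (Y \<omega>)\<^sup>2)"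
  shows "integrable M (\<lambda>\<omega>. (X \<omega> + Y \<omega>)\<^sup>2)"
    and "variance (\<lambda>\<omega>. X \<omega> + Y \<omega>) = variance X + variance Y"
proof -
  have XY: "integrable M (\<lambda>\<omega>. X \<omega> * Y \<omega>)"
    using indep_var_integrable[OF indep X(1) Y(1)] .
  have E_XY: "expectation (\<lambda>\<omega>. X \<omega> * Y \<omega>) = expectation X * expectation Y"
    using indep_var_lebesgue_integral[OF indep X(1) Y(1)] .
  have square: "(\<lambda>\<omega>. (X \<omega> + Y \<omega>)\<^sup>2) = (\<lambda>\<omega>. (X \<omega>)\<^sup>2 + 2 * (X \<omega> * Y \<omega>) + (Y \<omega>)\<^sup>2)"
    by (simp add: fun_eq_iff power2_sum)
  show int: "integrable M (\<lambda>\<omega>. (X \<omega> + Y \<omega>)\<^sup>2)"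
    unfolding square using X Y XY by simp
  have E_square: "expectation (\<lambda>\<omega>. (X \<omega> + Y \<omega>)\<^sup>2)
      = expectation (\<lambda>\<omega>. (X \<omega>)\<^sup>2) + 2 * (expectation X * expectation Y)
        + expectation (\<lambda>\<omega>. (Y \<omega>)\<^sup>2)"
    unfolding square using X Y XY by (simp add: E_XY)
  have "variance (\<lambda>\<omega>. X \<omega> + Y \<omega>)
      = expectation (\<lambda>\<omega>. (X \<omega> + Y \<omega>)\<^sup>2) - (expectation (\<lambda>\<omega>. X \<omega> + Y \<omega>))\<^sup>2"
    using X Y int by (intro variance_eq) simp_all
  also have "\<dots> = variance X + variance Y"
    unfolding E_square variance_eq[OF X] variance_eq[OF Y]
    using X Y by (simp add: power2_sum)
  finally show "variance (\<lambda>\<omega>. X \<omega> + Y \<omega>) = variance X + variance Y" .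
qed

lemma (in prob_space) variance_sum_indep_vars:
  fixes X :: "'i \<Rightarrow> 'a \<Rightarrow> real"
  assumes "finite I" and "indep_vars (\<lambda>_. borel) X I"
    and "\<And>i. i \<in> I \<Longrightarrow> integrable M (X i)"
    and "\<And>i. i \<in> I \<Longrightarrow> integrable M (\<lambda>\<omega>. (X i \<omega>)\<^sup>2)"
  shows "integrable M (\<lambda>\<omega>. (\<Sum>i\<in>I. X i \<omega>)\<^sup>2)"
    and "variance (\<lambda>\<omega>. \<Sum>i\<in>I. X i \<omega>) = (\<Sum>i\<in>I. variance (X i))"
proof -
  have "integrable M (\<lambda>\<omega>. (\<Sum>i\<in>I. X i \<omega>)\<^sup>2)
    \<and> variance (\<lambda>\<omega>. \<Sum>i\<in>I. X i \<omega>) = (\<Sum>i\<in>I. variance (X i))"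
    using assms
  proof (induction I rule: finite_induct)
    case (insert i I)
    let ?S = "\<lambda>\<omega>. \<Sum>j\<in>I. X j \<omega>"
    have "indep_var borel (X i) borel ?S"
      using insert.hyps insert.prems(1) by (rule indep_vars_sum)
    moreover have "indep_vars (\<lambda>_. borel) X I"
      using insert.prems(1) by (rule indep_vars_subset) auto
    then have "integrable M (\<lambda>\<omega>. (?S \<omega>)\<^sup>2)" "variance ?S = (\<Sum>j\<in>I. variance (X j))"
      using insert by simp_all
    moreover have "integrable M ?S"
      using insert.prems(2) by simp
    ultimately show ?case
      using variance_add_indep_var[of "X i" ?S] insert by simp
  qed simp
  then show "integrable M (\<lambda>\<omega>. (\<Sum>i\<in>I. X i \<omega>)\<^sup>2)"
    and "variance (\<lambda>\<omega>. \<Sum>i\<in>I. X i \<omega>) = (\<Sum>i\<in>I. variance (X i))"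
    by simp_all
qed

lemma integrable_Pi_pmf_component_iff:
  fixes h :: "'b \<Rightarrow> real"
  assumes "finite A" "i \<in> A"
  shows "integrable (Pi_pmf A dflt P) (\<lambda>f. h (f i)) \<longleftrightarrow> integrable (P i) h"
  using integrable_map_pmf_eq[of "\<lambda>f. f i" "Pi_pmf A dflt P" h]
  by (simp add: Pi_pmf_component assms)

lemma expectation_Pi_pmf_component:
  fixes h :: "'b \<Rightarrow> real"
  assumes "finite A" "i \<in> A"
  shows "measure_pmf.expectation (Pi_pmf A dflt P) (\<lambda>f. h (f i)) = measure_pmf.expectation (P i) h"
  using integral_map_pmf[of "\<lambda>f. f i" "Pi_pmf A dflt P" h]
  by (simp add: Pi_pmf_component assms)

lemma variance_Pi_pmf_component:
  fixes h :: "'b \<Rightarrow> real"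
  assumes "finite A" "i \<in> A"
  shows "measure_pmf.variance (Pi_pmf A dflt P) (\<lambda>f. h (f i)) = measure_pmf.variance (P i) h"
proof -
  have "measure_pmf.variance (Pi_pmf A dflt P) (\<lambda>f. h (f i))
      = measure_pmf.expectation (Pi_pmf A dflt P) (\<lambda>f. (h (f i) - measure_pmf.expectation (P i) h)\<^sup>2)"
    by (simp add: expectation_Pi_pmf_component assms)
  also have "\<dots> = measure_pmf.variance (P i) h"
    by (rule expectation_Pi_pmf_component[OF assms])
  finally show ?thesis .
qed

lemma expectation_sum_Pi_pmf:
  fixes P :: "'i \<Rightarrow> 'b pmf" and g :: "'i \<Rightarrow> 'b \<Rightarrow> real"
  assumes "finite A" "\<And>i. i \<in> A \<Longrightarrow> integrable (P i) (g i)"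
  shows "measure_pmf.expectation (Pi_pmf A dflt P) (\<lambda>f. \<Sum>i\<in>A. g i (f i))
    = (\<Sum>i\<in>A. measure_pmf.expectation (P i) (g i))"
  using assms
  by (simp add: Bochner_Integration.integral_sum integrable_Pi_pmf_component_iff
      expectation_Pi_pmf_component)

lemma variance_sum_Pi_pmf:
  fixes P :: "'i \<Rightarrow> 'b pmf" and g :: "'i \<Rightarrow> 'b \<Rightarrow> real"
  assumes "finite A"
    and "\<And>i. i \<in> A \<Longrightarrow> integrable (P i) (g i)"
    and "\<And>i. i \<in> A \<Longrightarrow> integrable (P i) (\<lambda>x. (g i x)\<^sup>2)"
  shows "measure_pmf.variance (Pi_pmf A dflt P) (\<lambda>f. \<Sum>i\<in>A. g i (f i))
    = (\<Sum>i\<in>A. measure_pmf.variance (P i) (g i))"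
proof -
  have indep: "prob_space.indep_vars (measure_pmf (Pi_pmf A dflt P)) (\<lambda>_. borel) (\<lambda>i f. g i (f i)) A"
    using indep_vars_Pi_pmf[OF \<open>finite A\<close>]
    by (rule prob_space.indep_vars_compose2[OF measure_pmf.prob_space_axioms]) simp
  have "measure_pmf.variance (Pi_pmf A dflt P) (\<lambda>f. \<Sum>i\<in>A. g i (f i))
      = (\<Sum>i\<in>A. measure_pmf.variance (Pi_pmf A dflt P) (\<lambda>f. g i (f i)))"
    using assms(1) indep
  proof (rule measure_pmf.variance_sum_indep_vars(2))
    fix i assume "i \<in> A"
    then show "integrable (Pi_pmf A dflt P) (\<lambda>f. g i (f i))"
      and "integrable (Pi_pmf A dflt P) (\<lambda>f. (g i (f i))\<^sup>2)"
      using assms integrable_Pi_pmf_component_iff[of A i dflt P "\<lambda>x. (g i x)\<^sup>2"]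
      by (simp_all add: integrable_Pi_pmf_component_iff)
  qed
  also have "\<dots> = (\<Sum>i\<in>A. measure_pmf.variance (P i) (g i))"
    using assms(1) by (intro sum.cong refl variance_Pi_pmf_component)
  finally show ?thesis .
qed

lemma (in prob_space) variance_const_add:
  fixes X :: "'a \<Rightarrow> real"
  assumes "integrable M X"
  shows "variance (\<lambda>\<omega>. c + X \<omega>) = variance X"
  using assms by (simp add: prob_space)

lemma expectation_bernoulli_flip:
  assumes "0 \<le> p" "p \<le> 1"
  shows "measure_pmf.expectation (bernoulli_pmf p) (\<lambda>x. w * of_bool (b \<noteq> x))
    = w * (if b then 1 - p else p)"
  using assms by simp

lemma variance_bernoulli_flip:
  assumes "0 \<le> p" "p \<le> 1"
  shows "measure_pmf.variance (bernoulli_pmf p) (\<lambda>x. w * of_bool (b \<noteq> x)) = w\<^sup>2 * p * (1 - p)"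
  using assms by (cases b) (simp_all add: power2_eq_square algebra_simps)

lemma sum_atLeast1_atMost_reverse:
  fixes g :: "nat \<Rightarrow> 'a::comm_monoid_add"
  shows "(\<Sum>i=1..n. g i) = (\<Sum>k<n. g (n - k))"
  using sum.atLeast1_atMost_eq[of g n] sum.nat_diff_reindex[of "\<lambda>k. g (Suc k)" n]
  by (simp add: Suc_diff_Suc)

lemma geometric_sum_quarter: "(\<Sum>i=1..n. (1/4::real) ^ i) = (1 - (1/4) ^ n) / 3"
proof (cases "n = 0")
  case False
  then show ?thesis
    using sum_gp_multiplied[of 1 n "1/4::real"] by simp
qed simp

definition scale32 :: "(nat \<Rightarrow> bool) \<Rightarrow> real" where
  "scale32 a = (-1) ^ of_bool (a 31) * 2 powr (real (exp_field a) - 127)"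

lemma val32_eq: "val32 a = scale32 a * (1 + (\<Sum>k<23. of_bool (a k) * (1/2) ^ (23 - k)))"
  unfolding val32_def scale32_def
  by (subst sum_atLeast1_atMost_reverse) simp

lemma scale32_flip_frac [simp]: "scale32 (flip_frac a f) = scale32 a"
  by (simp add: scale32_def exp_field_def flip_frac_def)

lemma val32_flip_frac:
  "val32 (flip_frac a f) = scale32 a + (\<Sum>k<23. scale32 a * (1/2) ^ (23 - k) * of_bool (a k \<noteq> f k))"
proof -
  have "(\<Sum>k<23. of_bool (flip_frac a f k) * (1/2) ^ (23 - k))
      = (\<Sum>k<23. of_bool (a k \<noteq> f k) * (1/2::real) ^ (23 - k))"
    by (intro sum.cong refl) (simp add: flip_frac_def)
  then show ?thesis
    by (simp only: val32_eq[of "flip_frac a f"] scale32_flip_frac)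
      (simp add: distrib_left sum_distrib_left mult_ac del: sum_mult_of_bool_eq sum_of_bool_mult_eq)
qed

lemma integrable_bernoulli_pmf: "integrable (bernoulli_pmf p) (h :: bool \<Rightarrow> real)"
  by (rule integrable_measure_pmf_finite) simp

lemma
  assumes "0 \<le> p" "p \<le> 1"
  shows expectation_perturbed32: "measure_pmf.expectation (perturbed32 p a) (\<lambda>x. x)
      = scale32 a + (\<Sum>k<23. scale32 a * (1/2) ^ (23 - k) * (if a k then 1 - p else p))"
    and variance_perturbed32: "measure_pmf.variance (perturbed32 p a) (\<lambda>x. x)
      = (\<Sum>k<23. (scale32 a * (1/2) ^ (23 - k))\<^sup>2 * p * (1 - p))"
proof -
  define Q where "Q = Pi_pmf {..<23::nat} False (\<lambda>_. bernoulli_pmf p)"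
  define g where "g = (\<lambda>k x. scale32 a * (1/2) ^ (23 - k) * of_bool (a k \<noteq> x))"
  define X where "X f = (\<Sum>k<23. g k (f k))" for f :: "nat \<Rightarrow> bool"
  have perturbed: "perturbed32 p a = map_pmf (\<lambda>f. scale32 a + X f) Q"
    unfolding perturbed32_def Q_def X_def g_def val32_flip_frac ..
  have "integrable Q X"
    unfolding X_def Q_def
    by (intro Bochner_Integration.integrable_sum)
      (simp add: integrable_Pi_pmf_component_iff integrable_bernoulli_pmf)
  moreover have "measure_pmf.expectation Q X = (\<Sum>k<23. measure_pmf.expectation (bernoulli_pmf p) (g k))"
    unfolding X_def Q_def by (rule expectation_sum_Pi_pmf) (simp_all add: integrable_bernoulli_pmf)
  moreover have "measure_pmf.variance Q X = (\<Sum>k<23. measure_pmf.variance (bernoulli_pmf p) (g k))"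
    unfolding X_def Q_def by (rule variance_sum_Pi_pmf) (simp_all add: integrable_bernoulli_pmf)
  moreover have "measure_pmf.expectation (bernoulli_pmf p) (g k)
      = scale32 a * (1/2) ^ (23 - k) * (if a k then 1 - p else p)" for k
    unfolding g_def by (rule expectation_bernoulli_flip[OF assms])
  moreover have "measure_pmf.variance (bernoulli_pmf p) (g k) = (scale32 a * (1/2) ^ (23 - k))\<^sup>2 * p * (1 - p)" for k
    unfolding g_def by (rule variance_bernoulli_flip[OF assms])
  ultimately show "measure_pmf.expectation (perturbed32 p a) (\<lambda>x. x)
      = scale32 a + (\<Sum>k<23. scale32 a * (1/2) ^ (23 - k) * (if a k then 1 - p else p))"
    and "measure_pmf.variance (perturbed32 p a) (\<lambda>x. x)
      = (\<Sum>k<23. (scale32 a * (1/2) ^ (23 - k))\<^sup>2 * p * (1 - p))"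
    unfolding perturbed by (simp_all add: measure_pmf.variance_const_add)
qed

lemma scale32_squared: "(scale32 a)\<^sup>2 = 2 powr (2 * real (exp_field a) - 254)"
  by (simp add: scale32_def power_mult_distrib power2_eq_square powr_add[symmetric])

lemma flip_mean_sum_eq:
  fixes c p :: real
  shows "c + (\<Sum>k<n. c * (1/2) ^ (n - k) * (if b k then 1 - p else p))
    = (1 - 2 * p) * (c * (1 + (\<Sum>k<n. of_bool (b k) * (1/2) ^ (n - k))))
      + c * (2 * p + (\<Sum>i=1..n. (1/2) ^ i * p))"
proof -
  have "(\<Sum>k<n. c * (1/2) ^ (n - k) * (if b k then 1 - p else p))
      = (\<Sum>k<n. (1 - 2 * p) * c * (of_bool (b k) * (1/2) ^ (n - k)) + c * ((1/2) ^ (n - k) * p))"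
    by (intro sum.cong refl) (simp add: algebra_simps)
  also have "\<dots> = (1 - 2 * p) * c * (\<Sum>k<n. of_bool (b k) * (1/2) ^ (n - k))
      + c * (\<Sum>k<n. (1/2) ^ (n - k) * p)"
    by (simp only: sum.distrib sum_distrib_left)
  finally show ?thesis
    unfolding sum_atLeast1_atMost_reverse by (simp add: algebra_simps)
qed

lemma flip_variance_sum_eq:
  fixes c p :: real
  shows "(\<Sum>k<n. (c * (1/2) ^ (n - k))\<^sup>2 * p * (1 - p)) = (1 - (1/4) ^ n) / 3 * p * (1 - p) * c\<^sup>2"
proof -
  have quarter: "((1/2::real) ^ m)\<^sup>2 = (1/4) ^ m" for m
    by (simp add: power2_eq_square flip: power_mult_distrib)
  have "(\<Sum>k<n. (c * (1/2) ^ (n - k))\<^sup>2 * p * (1 - p)) = c\<^sup>2 * p * (1 - p) * (\<Sum>i=1..n. (1/4) ^ i)"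
    unfolding sum_atLeast1_atMost_reverse sum_distrib_left
    by (intro sum.cong refl) (simp add: power_mult_distrib quarter)
  also have "\<dots> = (1 - (1/4) ^ n) / 3 * p * (1 - p) * c\<^sup>2"
    unfolding geometric_sum_quarter by (simp only: mult_ac)
  finally show ?thesis .
qed

theorem lemma1:
  fixes a :: "nat \<Rightarrow> bool" and p :: real
  assumes "normalized32 a" and "0 \<le> p" and "p \<le> 1"
  shows "(measure_pmf.expectation (perturbed32 p a) (\<lambda>x. x) =
           (1 - 2 * p) * val32 a + (-1) ^ of_bool (a 31) * 2 powr (real (exp_field a) - 127)
             * (2 * p + (\<Sum>i=1..23. (1/2) ^ i * p))) \<and>
         (measure_pmf.variance (perturbed32 p a) (\<lambda>x. x) =
           (1 - (1/4) ^ 23) / 3 * p * (1 - p) * 2 powr (2 * real (exp_field a) - 254))"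
  using expectation_perturbed32[OF assms(2,3), of a] variance_perturbed32[OF assms(2,3), of a]
  unfolding flip_mean_sum_eq flip_variance_sum_eq scale32_squared val32_eq[symmetric]
  by (simp add: scale32_def)

end
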